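(* Let $K \colon \mathbb{Z}^2 \to \mathbb{R}$ be a finitely supported convolution kernel, $f(\bm{X}) = \bm{X} \ast K$ the corresponding convolution on bounded fields $\bm{X} \colon \mathbb{Z}^2 \to \mathbb{R}$, and let $\sigma \colon \mathbb{R} \to \mathbb{R}$ be piecewise differentiable, applied pointwise to fields. Suppose the composition $\varphi = \sigma \circ f$ is equivariant with respect to arbitrary uniform motion, i.e. $\varphi(\bm{X} + \bm{C}) = \varphi(\bm{X}) + \bm{C}$ for every field $\bm{X}$ and every constant field $\bm{C}$. Then $\varphi$ is affine of the form $\varphi(\bm{X}) = \bm{X} \ast K' + b$ for some real number $b$ and some finitely supported kernel $K'$ with $\sum_v K'(v) = 1$.
   Context: Convolution: $(\bm{X}\ast K)(p) = \sum_{q \in \mathbb{Z}^2} \bm{X}(p+q)K(q)$. A constant field $\bm{C}$ takes the same real value at every point of $\mathbb{Z}^2$; adding $b$ to a field means adding the constant field with value $b$. *)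

theory Defs
  imports "HOL-Analysis.Analysis"
begin

type_synonym field2 = "int \<times> int \<Rightarrow> real"

definition fin_supp :: "field2 \<Rightarrow> bool" where
  "fin_supp K \<longleftrightarrow> finite {q. K q \<noteq> 0}"

definition bounded_field :: "field2 \<Rightarrow> bool" where
  "bounded_field X \<longleftrightarrow> (\<exists>M. \<forall>p. \<bar>X p\<bar> \<le> M)"

text \<open>Convolution (X * K)(p) = sum over q in Z^2 of X(p+q) K(q); for a finitely supported
  kernel K this is the finite sum over the support of K.\<close>
definition conv :: "field2 \<Rightarrow> field2 \<Rightarrow> field2" where
  "conv X K p = (\<Sum>q\<in>{q. K q \<noteq> 0}. X (fst p + fst q, snd p + snd q) * K q)"

end

theory Submission
  imports Defs
begin

text \<open>Feeding the zero field and a constant shift c into the equivariance identity gives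
  \<sigma>(c s) = \<sigma>(0) + c, where s is the total mass of K. Hence s \<noteq> 0 and \<sigma> is the affine map
  t \<mapsto> t / s + \<sigma>(0), so \<sigma> \<circ> f is convolution with K / s (total mass 1) plus \<sigma>(0).\<close>

definition kernel_mass :: "field2 \<Rightarrow> real" where
  "kernel_mass K = (\<Sum>q\<in>{q. K q \<noteq> 0}. K q)"

lemma conv_const: "conv (\<lambda>_. c) K p = c * kernel_mass K"
  unfolding conv_def kernel_mass_def by (simp add: sum_distrib_left)

lemma conv_scale_kernel: "conv X (\<lambda>q. a * K q) p = a * conv X K p"
proof (cases "a = 0")
  case False
  then have "{q. a * K q \<noteq> 0} = {q. K q \<noteq> 0}" by auto
  then show ?thesis unfolding conv_def by (simp add: sum_distrib_left ac_simps)
qed (simp add: conv_def)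

lemma kernel_mass_scale: "kernel_mass (\<lambda>q. a * K q) = a * kernel_mass K"
  using conv_scale_kernel[of "\<lambda>_. 1" a K 0] conv_const[of 1] by simp

lemma fin_supp_scale: "fin_supp K \<Longrightarrow> fin_supp (\<lambda>q. a * K q)"
  unfolding fin_supp_def by (rule finite_subset[rotated]) auto

lemma affine_if_shift_equivariant:
  fixes \<sigma> :: "real \<Rightarrow> real"
  assumes "\<And>c. \<sigma> (c * s) = \<sigma> 0 + c"
  shows "s \<noteq> 0" and "\<sigma> t = t / s + \<sigma> 0"
proof -
  show "s \<noteq> 0" using assms[of 1] by auto
  then show "\<sigma> t = t / s + \<sigma> 0" using assms[of "t / s"] by simp
qed

theorem mainTheorem6:
  fixes K :: field2 and \<sigma> :: "real \<Rightarrow> real"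
  assumes "fin_supp K"
    and "\<sigma> piecewise_differentiable_on UNIV"
    and equiv: "\<forall>X c. bounded_field X \<longrightarrow>
       (\<lambda>p. \<sigma> (conv (\<lambda>x. X x + c) K p)) = (\<lambda>p. \<sigma> (conv X K p) + c)"
  shows "\<exists>b K'. fin_supp K' \<and> (\<Sum>v\<in>{v. K' v \<noteq> 0}. K' v) = 1 \<and>
     (\<forall>X. bounded_field X \<longrightarrow> (\<lambda>p. \<sigma> (conv X K p)) = (\<lambda>p. conv X K' p + b))"
proof -
  define s where "s = kernel_mass K"
  have "bounded_field (\<lambda>_. 0)" unfolding bounded_field_def by auto
  with equiv have "(\<lambda>p. \<sigma> (conv (\<lambda>_. 0 + c) K p)) = (\<lambda>p. \<sigma> (conv (\<lambda>_. 0) K p) + c)" for c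
    by blast
  then have "\<sigma> (conv (\<lambda>_. 0 + c) K 0) = \<sigma> (conv (\<lambda>_. 0) K 0) + c" for c
    by (rule fun_cong)
  then have "\<sigma> (c * s) = \<sigma> 0 + c" for c by (simp add: conv_const s_def)
  note \<sigma>_affine = affine_if_shift_equivariant[OF this]
  define K' where "K' = (\<lambda>q. inverse s * K q)"
  have "fin_supp K'" unfolding K'_def using assms(1) by (rule fin_supp_scale)
  moreover have "kernel_mass K' = 1"
    unfolding K'_def kernel_mass_scale s_def[symmetric] using \<sigma>_affine(1) by simp
  moreover have "\<sigma> (conv X K p) = conv X K' p + \<sigma> 0" for X p
    unfolding K'_def conv_scale_kernel \<sigma>_affine(2)[of "conv X K p"]
    by (simp add: divide_inverse mult.commute)
  ultimately show ?thesis unfolding kernel_mass_def by blast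
qed

end
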